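(* Suppose a random vector $X$ in $\mathbb{R}^d$ satisfies exponential concentration with constant $\alpha<\infty$. Then for any $V>0$, $p\geq 2$ and finite $T\subset\mathbb{R}^d$, \[ \Big(\mathbb{E}\sum_{t\in T}(|\langle t,X\rangle|\wedge V)^p\Big)^{1/p}\leq 2\,\mathbb{E}\Big(\sum_{t\in T}(|\langle t,X\rangle|\wedge V)^p\Big)^{1/p}+2^{1/p}V^{(p-2)/p}(\alpha\beta(T))^{2/p}, \] where $\beta(T):=\sup_{|x|=1}\big(\sum_{t\in T}|\langle t,x\rangle|^2\big)^{1/2}$.
   Context: $a\wedge b=\min\{a,b\}$; $B_2^d$ is the Euclidean unit ball. A random vector $X$ in $\mathbb{R}^d$ satisfies exponential concentration with constant $\alpha$ if for every Borel set $B\subset\mathbb{R}^d$ with $\mathbb{P}(X\in B)\geq 1/2$ one has $\mathbb{P}(X\in B+\alpha uB_2^d)\geq 1-e^{-u}$ for all $u>0$. *)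

theory Defs
  imports "HOL-Probability.Probability"
begin

text \<open>The enlarged set B + alpha u B_2 is analytic, hence universally
measurable; its probability is taken with respect to the completed law of X.\<close>
definition exp_concentration ::
  "'a measure \<Rightarrow> ('a \<Rightarrow> 'd::euclidean_space) \<Rightarrow> real \<Rightarrow> bool" where
  "exp_concentration M X \<alpha> \<longleftrightarrow>
     (\<forall>B \<in> sets borel. measure M (X -` B \<inter> space M) \<ge> 1/2 \<longrightarrow>
        (\<forall>u>0. measure (completion (distr M borel X))
                 {b + y | b y. b \<in> B \<and> y \<in> cball 0 (\<alpha> * u)} \<ge> 1 - exp (- u)))"

definition beta_T :: "'d::euclidean_space set \<Rightarrow> real" where
  "beta_T T = (SUP x\<in>sphere 0 1. sqrt (\<Sum>t\<in>T. \<bar>t \<bullet> x\<bar>^2))"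

end

theory Submission
  imports Defs
begin

text \<open>Let F(x) = (\<Sum>t\<in>T. min |<t,x>| V ^ p)^(1/p). Minkowski's inequality for finite sums and the
  bound min s V ^ p \<le> V^(p-2) s^2 give F(b + y) \<le> F(b) + (V^(p-2) \<beta>(T)^2 |y|^2)^(1/p).
  By Markov's inequality, A = 2 E F(X) + \<delta> satisfies P(F(X) < A) \<ge> 1/2, so exponential concentration
  of the set {F < A} shows that the excess W = max 0 (F(X) - A) exceeds (c u^2)^(1/p), where
  c = V^(p-2) (\<alpha> \<beta>(T))^2, with probability at most exp(-u). The layer-cake formula then gives
  E W^p \<le> 2c, and Minkowski's inequality in L^p yields
  (E F(X)^p)^(1/p) \<le> A + (E W^p)^(1/p) \<le> 2 E F(X) + \<delta> + (2c)^(1/p). Now let \<delta> \<rightarrow> 0.\<close>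

lemma convex_on_powr_nonneg:
  fixes p :: real
  assumes "p \<ge> 1"
  shows "convex_on {0..} (\<lambda>x. x powr p)"
proof
  have scaled: "(t * z) powr p \<le> t * z powr p" if "0 \<le> t" "t \<le> 1" "0 \<le> z" for t z :: real
  proof -
    have "t powr p \<le> t powr 1" using that assms by (intro powr_mono') auto
    then show ?thesis using that by (simp add: powr_mult mult_right_mono)
  qed
  fix t x y :: real
  assume t: "0 < t" "t < 1" and x: "x \<in> {0..}" and y: "y \<in> {0..}"
  consider "x = 0" | "y = 0" | "x > 0" "y > 0" using x y by fastforce
  then show "((1 - t) *\<^sub>R x + t *\<^sub>R y) powr p \<le> (1 - t) * x powr p + t * y powr p"
  proof cases
    case 1 then show ?thesis using scaled[of t y] t y by simp
  next
    case 2 then show ?thesis using scaled[of "1 - t" x] t x by simp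
  next
    case 3 then show ?thesis using convex_onD[OF powr_convex[OF assms], of t x y] t by simp
  qed
qed simp

lemma powr_add_le_weighted:
  fixes p x y a b :: real
  assumes "p \<ge> 1" "x \<ge> 0" "y \<ge> 0" "a > 0" "b > 0"
  shows "(x + y) powr p \<le> (a + b) powr (p - 1) * (x powr p * a powr (1 - p) + y powr p * b powr (1 - p))"
proof -
  define k where "k = a + b"
  have k: "k > 0" using assms by (simp add: k_def)
  have weights: "1 - b / k = a / k" using k by (simp add: k_def field_simps)
  have "x + y = (1 - b / k) *\<^sub>R (x * k / a) + (b / k) *\<^sub>R (y * k / b)"
    using assms k by (simp add: weights)
  then have "(x + y) powr p \<le> (1 - b / k) * (x * k / a) powr p + (b / k) * (y * k / b) powr p"
    using convex_onD[OF convex_on_powr_nonneg[OF assms(1)], of "b / k" "x * k / a" "y * k / b"]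
      assms k by (simp add: k_def)
  also have "\<dots> = k powr (p - 1) * (x powr p * a powr (1 - p) + y powr p * b powr (1 - p))"
    using assms k by (simp add: weights powr_mult powr_divide powr_diff field_simps)
  finally show ?thesis by (simp add: k_def)
qed

lemma Minkowski_integral_powr:
  fixes N :: "'a measure" and f g :: "'a \<Rightarrow> real"
  assumes p: "p \<ge> 1"
    and f: "\<And>x. x \<in> space N \<Longrightarrow> f x \<ge> 0" and g: "\<And>x. x \<in> space N \<Longrightarrow> g x \<ge> 0"
    and int_f: "integrable N (\<lambda>x. f x powr p)" and int_g: "integrable N (\<lambda>x. g x powr p)"
    and int_fg: "integrable N (\<lambda>x. (f x + g x) powr p)"
  shows "(\<integral>x. (f x + g x) powr p \<partial>N) powr (1/p)
         \<le> (\<integral>x. f x powr p \<partial>N) powr (1/p) + (\<integral>x. g x powr p \<partial>N) powr (1/p)"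
proof (rule field_le_epsilon)
  fix e :: real assume e: "e > 0"
  define a where "a = (\<integral>x. f x powr p \<partial>N) powr (1/p) + e/2"
  define b where "b = (\<integral>x. g x powr p \<partial>N) powr (1/p) + e/2"
  have a: "a > 0" and b: "b > 0" using e by (auto simp: a_def b_def add_nonneg_pos)
  have scale: "I * c powr (1 - p) \<le> c" if "I \<ge> 0" "I powr (1/p) \<le> c" "c > 0" for I c :: real
  proof -
    have "I = (I powr (1/p)) powr p" using that p by (simp add: powr_powr)
    also have "\<dots> \<le> c powr p" using that p by (intro powr_mono2) auto
    finally show ?thesis using that by (simp add: powr_diff field_simps)
  qed
  have fa: "(\<integral>x. f x powr p \<partial>N) * a powr (1 - p) \<le> a"
    using a e f by (intro scale integral_nonneg) (auto simp: a_def)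
  have gb: "(\<integral>x. g x powr p \<partial>N) * b powr (1 - p) \<le> b"
    using b e g by (intro scale integral_nonneg) (auto simp: b_def)
  have "(\<integral>x. (f x + g x) powr p \<partial>N)
        \<le> (\<integral>x. (a + b) powr (p - 1) * (f x powr p * a powr (1 - p) + g x powr p * b powr (1 - p)) \<partial>N)"
    using int_f int_g int_fg f g by (intro integral_mono powr_add_le_weighted p a b) auto
  also have "\<dots> = (a + b) powr (p - 1) * ((\<integral>x. f x powr p \<partial>N) * a powr (1 - p) + (\<integral>x. g x powr p \<partial>N) * b powr (1 - p))"
    using int_f int_g by simp
  also have "\<dots> \<le> (a + b) powr (p - 1) * (a + b)"
    using fa gb by (intro mult_left_mono) auto
  also have "\<dots> = (a + b) powr p"
    using a b by (simp add: powr_diff)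
  finally have "(\<integral>x. (f x + g x) powr p \<partial>N) powr (1/p) \<le> ((a + b) powr p) powr (1/p)"
    using p by (intro powr_mono2 integral_nonneg_AE) (auto intro: f g)
  also have "\<dots> = a + b" using a b p by (simp add: powr_powr)
  finally show "(\<integral>x. (f x + g x) powr p \<partial>N) powr (1/p)
         \<le> (\<integral>x. f x powr p \<partial>N) powr (1/p) + (\<integral>x. g x powr p \<partial>N) powr (1/p) + e"
    by (simp add: a_def b_def)
qed

lemma Minkowski_sum_powr:
  fixes a b :: "'i \<Rightarrow> real"
  assumes "finite I" "p \<ge> 1" "\<And>i. a i \<ge> 0" "\<And>i. b i \<ge> 0"
  shows "(\<Sum>i\<in>I. (a i + b i) powr p) powr (1/p)
         \<le> (\<Sum>i\<in>I. a i powr p) powr (1/p) + (\<Sum>i\<in>I. b i powr p) powr (1/p)"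
  using Minkowski_integral_powr[of p "count_space I" a b] assms
  by (simp add: lebesgue_integral_count_space_finite integrable_count_space)

lemma bdd_above_beta_T:
  fixes T :: "'d::euclidean_space set"
  shows "bdd_above ((\<lambda>x. sqrt (\<Sum>t\<in>T. \<bar>t \<bullet> x\<bar>^2)) ` sphere 0 1)"
proof (rule bdd_aboveI2)
  fix x :: 'd assume x: "x \<in> sphere 0 1"
  have "\<bar>t \<bullet> x\<bar>^2 \<le> (norm t)^2" for t
    using Cauchy_Schwarz_ineq2[of t x] x by (intro power_mono) auto
  then show "sqrt (\<Sum>t\<in>T. \<bar>t \<bullet> x\<bar>^2) \<le> sqrt (\<Sum>t\<in>T. (norm t)^2)"
    by (intro real_sqrt_le_mono sum_mono)
qed

lemma beta_T_nonneg: "beta_T T \<ge> 0"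
proof -
  obtain i where "i \<in> (Basis :: 'a::euclidean_space set)" using nonempty_Basis by blast
  then have "sqrt (\<Sum>t\<in>T. \<bar>t \<bullet> i\<bar>^2) \<le> beta_T T"
    unfolding beta_T_def by (intro cSUP_upper bdd_above_beta_T) auto
  moreover have "sqrt (\<Sum>t\<in>T. \<bar>t \<bullet> i\<bar>^2) \<ge> 0" by (simp add: sum_nonneg)
  ultimately show ?thesis by linarith
qed

lemma sum_inner_power2_le_beta_T:
  fixes T :: "'d::euclidean_space set"
  shows "(\<Sum>t\<in>T. \<bar>t \<bullet> y\<bar>^2) \<le> (beta_T T * norm y)^2"
proof (cases "y = 0")
  case False
  define x where "x = y /\<^sub>R norm y"
  have "x \<in> sphere 0 1" using False by (simp add: x_def)
  then have "sqrt (\<Sum>t\<in>T. \<bar>t \<bullet> x\<bar>^2) \<le> beta_T T"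
    unfolding beta_T_def by (intro cSUP_upper bdd_above_beta_T)
  then have "(\<Sum>t\<in>T. \<bar>t \<bullet> x\<bar>^2) \<le> (beta_T T)^2"
    by (rule sqrt_le_D)
  moreover have "(\<Sum>t\<in>T. \<bar>t \<bullet> y\<bar>^2) = (norm y)^2 * (\<Sum>t\<in>T. \<bar>t \<bullet> x\<bar>^2)"
    using False by (simp add: x_def sum_distrib_left power_mult_distrib field_simps)
  ultimately show ?thesis by (simp add: power_mult_distrib mult_left_mono mult.commute[of "(beta_T T)^2"])
qed simp

lemma min_powr_le_powr_mult_power2:
  fixes z V p :: real
  assumes "z \<ge> 0" "V > 0" "p \<ge> 2"
  shows "(min z V) powr p \<le> V powr (p - 2) * z^2"
proof (cases "z = 0")
  case False
  then have m: "min z V > 0" using assms by simp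
  have "(min z V) powr p = (min z V) powr (p - 2) * (min z V)^2"
    using m by (simp flip: powr_add powr_numeral)
  also have "\<dots> \<le> V powr (p - 2) * z^2"
    using assms m by (intro mult_mono powr_mono2 power_mono) auto
  finally show ?thesis .
qed (use assms in simp)

definition truncated_lp :: "'d::euclidean_space set \<Rightarrow> real \<Rightarrow> real \<Rightarrow> 'd \<Rightarrow> real" where
  "truncated_lp T V p x = (\<Sum>t\<in>T. (min \<bar>t \<bullet> x\<bar> V) powr p) powr (1/p)"

lemma truncated_lp_nonneg: "truncated_lp T V p x \<ge> 0"
  by (simp add: truncated_lp_def)

lemma truncated_lp_le:
  assumes "V > 0" "p > 0"
  shows "truncated_lp T V p x \<le> (real (card T) * V powr p) powr (1/p)"
  unfolding truncated_lp_def using assms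
  by (intro powr_mono2 sum_nonneg sum_bounded_above) auto

lemma truncated_lp_powr:
  assumes "p > 0"
  shows "truncated_lp T V p x powr p = (\<Sum>t\<in>T. (min \<bar>t \<bullet> x\<bar> V) powr p)"
  unfolding truncated_lp_def using assms by (simp add: powr_powr sum_nonneg)

lemma truncated_lp_add_le:
  fixes T :: "'d::euclidean_space set"
  assumes "finite T" "p \<ge> 2" "V > 0"
  shows "truncated_lp T V p (b + y)
         \<le> truncated_lp T V p b + (V powr (p - 2) * (beta_T T * norm y)^2) powr (1/p)"
proof -
  have "min \<bar>t \<bullet> (b + y)\<bar> V \<le> min \<bar>t \<bullet> b\<bar> V + min \<bar>t \<bullet> y\<bar> V" for t
    using abs_triangle_ineq[of "t \<bullet> b" "t \<bullet> y"] assms by (auto simp: inner_add_right min_def)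
  then have "truncated_lp T V p (b + y)
             \<le> (\<Sum>t\<in>T. (min \<bar>t \<bullet> b\<bar> V + min \<bar>t \<bullet> y\<bar> V) powr p) powr (1/p)"
    unfolding truncated_lp_def using assms
    by (intro powr_mono2 sum_mono sum_nonneg) auto
  also have "\<dots> \<le> truncated_lp T V p b + (\<Sum>t\<in>T. (min \<bar>t \<bullet> y\<bar> V) powr p) powr (1/p)"
    unfolding truncated_lp_def using assms by (intro Minkowski_sum_powr) auto
  also have "(\<Sum>t\<in>T. (min \<bar>t \<bullet> y\<bar> V) powr p) powr (1/p)
             \<le> (V powr (p - 2) * (beta_T T * norm y)^2) powr (1/p)"
  proof -
    have "(\<Sum>t\<in>T. (min \<bar>t \<bullet> y\<bar> V) powr p) \<le> V powr (p - 2) * (\<Sum>t\<in>T. \<bar>t \<bullet> y\<bar>^2)"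
      unfolding sum_distrib_left using assms by (intro sum_mono min_powr_le_powr_mult_power2) auto
    also have "\<dots> \<le> V powr (p - 2) * (beta_T T * norm y)^2"
      by (intro mult_left_mono sum_inner_power2_le_beta_T) auto
    finally show ?thesis using assms by (intro powr_mono2 sum_nonneg) auto
  qed
  finally show ?thesis by simp
qed

lemma (in prob_space) exp_concentration_nonneg:
  assumes "exp_concentration M X \<alpha>"
  shows "\<alpha> \<ge> 0"
proof (rule ccontr)
  assume "\<not> \<alpha> \<ge> 0"
  then have empty: "{b + y | b y. b \<in> UNIV \<and> y \<in> cball 0 (\<alpha> * 1)} = {}" by simp
  have "measure M (X -` UNIV \<inter> space M) \<ge> 1/2"
    by (simp add: prob_space)
  moreover have "UNIV \<in> sets borel" by simp
  ultimately have "\<forall>u>0. 1 - exp (- u) \<le> measure (completion (distr M borel X))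
                     {b + y | b y. b \<in> UNIV \<and> y \<in> cball 0 (\<alpha> * u)}"
    using assms unfolding exp_concentration_def by blast
  then have "1 - exp (- 1) \<le> measure (completion (distr M borel X)) {}"
    unfolding empty[symmetric] using zero_less_one by blast
  then show False by simp
qed

lemma (in prob_space) exp_concentration_upper_tail:
  fixes X :: "'a \<Rightarrow> 'd::euclidean_space" and F :: "'d \<Rightarrow> real"
  assumes [measurable]: "X \<in> borel_measurable M"
    and conc: "exp_concentration M X \<alpha>"
    and [measurable]: "F \<in> borel_measurable borel"
    and half: "measure M {\<omega>\<in>space M. F (X \<omega>) < A} \<ge> 1/2"
    and u: "u > 0"
    and shift: "\<And>b y. norm y \<le> \<alpha> * u \<Longrightarrow> F (b + y) \<le> F b + s"
  shows "measure M {\<omega>\<in>space M. F (X \<omega>) \<ge> A + s} \<le> exp (- u)"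
proof -
  interpret L: prob_space "completion (distr M borel X)"
    by (intro prob_space.prob_space_completion prob_space_distr) simp
  define B where "B = {x. F x < A}"
  define C where "C = {x. F x < A + s}"
  have [measurable]: "B \<in> sets borel" "C \<in> sets borel" unfolding B_def C_def by measurable
  have "X -` B \<inter> space M = {\<omega>\<in>space M. F (X \<omega>) < A}" by (auto simp: B_def)
  then have "1 - exp (- u) \<le> measure (completion (distr M borel X))
                                {b + y | b y. b \<in> B \<and> y \<in> cball 0 (\<alpha> * u)}"
    using conc half u unfolding exp_concentration_def by auto
  \<comment> \<open>the enlarged set need not be measurable; monotonicity only asks this of \<open>C\<close>\<close>
  also have "\<dots> \<le> measure (completion (distr M borel X)) C"
  proof (rule L.finite_measure_mono)
    show "{b + y | b y. b \<in> B \<and> y \<in> cball 0 (\<alpha> * u)} \<subseteq> C"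
    proof
      fix x assume "x \<in> {b + y | b y. b \<in> B \<and> y \<in> cball 0 (\<alpha> * u)}"
      then obtain b y where "x = b + y" "F b < A" "norm y \<le> \<alpha> * u" by (auto simp: B_def)
      then show "x \<in> C" using shift[of y b] by (simp add: C_def)
    qed
  qed simp
  also have "\<dots> = measure M {\<omega>\<in>space M. F (X \<omega>) < A + s}"
    by (simp add: measure_distr vimage_def Int_def C_def conj_commute)
  also have "\<dots> = 1 - measure M {\<omega>\<in>space M. F (X \<omega>) \<ge> A + s}"
    using prob_neg[of "\<lambda>\<omega>. F (X \<omega>) \<ge> A + s"] by (simp add: not_le)
  finally show ?thesis by simp
qed

lemma (in prob_space) prob_less_twice_expectation:
  fixes Z :: "'a \<Rightarrow> real"
  assumes "integrable M Z" "\<And>\<omega>. \<omega> \<in> space M \<Longrightarrow> Z \<omega> \<ge> 0" "\<delta> > 0"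
  shows "prob {\<omega>\<in>space M. Z \<omega> < 2 * expectation Z + \<delta>} \<ge> 1/2"
proof -
  let ?A = "2 * expectation Z + \<delta>"
  have E: "expectation Z \<ge> 0" using assms(2) by (intro integral_nonneg_AE AE_I2) auto
  have A: "?A > 0" using E assms(3) by simp
  have "prob {\<omega>\<in>space M. Z \<omega> \<ge> ?A} \<le> expectation Z / ?A"
    using assms A by (intro integral_Markov_inequality_measure[of _ _ "space M"]) auto
  also have "\<dots> \<le> 1/2" using E A assms(3) by (simp add: field_simps)
  finally have upper: "prob {\<omega>\<in>space M. Z \<omega> \<ge> ?A} \<le> 1/2" .
  have "{\<omega>\<in>space M. Z \<omega> \<ge> ?A} \<in> events"
    using borel_measurable_integrable[OF assms(1)] by measurable
  then have "prob {\<omega>\<in>space M. Z \<omega> < ?A} = 1 - prob {\<omega>\<in>space M. Z \<omega> \<ge> ?A}"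
    using prob_neg[of "\<lambda>\<omega>. Z \<omega> \<ge> ?A"] by (simp add: not_le)
  with upper show ?thesis by linarith
qed

lemma (in prob_space) exp_concentration_excess_tail:
  fixes X :: "'a \<Rightarrow> 'd::euclidean_space" and F :: "'d \<Rightarrow> real"
  assumes [measurable]: "X \<in> borel_measurable M" "F \<in> borel_measurable borel"
    and conc: "exp_concentration M X \<alpha>"
    and nonneg: "\<And>x. F x \<ge> 0" and int_F: "integrable M (\<lambda>\<omega>. F (X \<omega>))"
    and "K \<ge> 0" "p > 0" "\<delta> > 0" "u > 0"
    and shift: "\<And>b y. F (b + y) \<le> F b + (K * norm y ^ 2) powr (1/p)"
  shows "prob {\<omega>\<in>space M. max 0 (F (X \<omega>) - (2 * expectation (\<lambda>\<omega>. F (X \<omega>)) + \<delta>))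
                             > (K * \<alpha>^2 * u^2) powr (1/p)} \<le> exp (- u)"
proof -
  let ?A = "2 * expectation (\<lambda>\<omega>. F (X \<omega>)) + \<delta>" and ?s = "(K * \<alpha>^2 * u^2) powr (1/p)"
  have "\<alpha> \<ge> 0" by (rule exp_concentration_nonneg[OF conc])
  have "F (b + y) \<le> F b + ?s" if "norm y \<le> \<alpha> * u" for b y
  proof -
    have "norm y ^ 2 \<le> (\<alpha> * u)^2" using that by (intro power_mono) auto
    then have "(K * norm y ^ 2) powr (1/p) \<le> ?s"
      using \<open>K \<ge> 0\<close> \<open>p > 0\<close> mult_left_mono[of _ _ K]
      by (intro powr_mono2) (auto simp: power_mult_distrib mult.assoc)
    then show ?thesis using shift[of b y] by linarith
  qed
  then have "prob {\<omega>\<in>space M. F (X \<omega>) \<ge> ?A + ?s} \<le> exp (- u)"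
    using prob_less_twice_expectation[OF int_F nonneg \<open>\<delta> > 0\<close>] \<open>u > 0\<close>
    by (intro exp_concentration_upper_tail[OF _ conc]) auto
  moreover have "{\<omega>\<in>space M. max 0 (F (X \<omega>) - ?A) > ?s} \<subseteq> {\<omega>\<in>space M. F (X \<omega>) \<ge> ?A + ?s}"
    using powr_ge_zero[of "K * \<alpha>^2 * u^2" "1/p"] by (auto simp: max_def split: if_splits)
  moreover have "{\<omega>\<in>space M. F (X \<omega>) \<ge> ?A + ?s} \<in> events" by measurable
  ultimately show ?thesis by (meson finite_measure_mono order_trans)
qed

lemma (in prob_space) nn_integral_power2_le_of_exp_tail:
  fixes U :: "'a \<Rightarrow> real"
  assumes [measurable]: "U \<in> borel_measurable M"
    and nonneg: "\<And>\<omega>. \<omega> \<in> space M \<Longrightarrow> U \<omega> \<ge> 0"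
    and tail: "\<And>u. u > 0 \<Longrightarrow> prob {\<omega>\<in>space M. U \<omega> > u} \<le> exp (- u)"
  shows "(\<integral>\<^sup>+\<omega>. ennreal (U \<omega> ^ 2) \<partial>M) \<le> 2"
proof -
  interpret pair_sigma_finite M lborel
    by (simp add: pair_sigma_finite_def sigma_finite_measure_axioms lborel.sigma_finite_measure_axioms)
  define f where "f \<omega> u = ennreal (2 * u) * indicator {0..<U \<omega>} u" for \<omega> and u :: real
  have [measurable]: "case_prod f \<in> borel_measurable (M \<Otimes>\<^sub>M lborel)"
    unfolding f_def indicator_def atLeastLessThan_iff by measurable
  have layer: "ennreal (U \<omega> ^ 2) = (\<integral>\<^sup>+u. f \<omega> u \<partial>lborel)" if "\<omega> \<in> space M" for \<omega>
  proof -
    have "AE u in lborel. f \<omega> u = ennreal (2 * u) * indicator {0..U \<omega>} u"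
      using AE_lborel_singleton[of "U \<omega>"] by eventually_elim (auto simp: f_def indicator_def)
    then have "(\<integral>\<^sup>+u. f \<omega> u \<partial>lborel) = (\<integral>\<^sup>+u. ennreal (2 * u) * indicator {0..U \<omega>} u \<partial>lborel)"
      by (rule nn_integral_cong_AE)
    also have "\<dots> = ennreal (U \<omega> ^ 2 - 0 ^ 2)"
      by (rule nn_integral_FTC_Icc) (auto intro!: derivative_eq_intros simp: nonneg that)
    finally show ?thesis by simp
  qed
  have slice: "(\<integral>\<^sup>+\<omega>. f \<omega> u \<partial>M) \<le> ennreal (2 * u * exp (- u)) * indicator {0..} u" for u
  proof (cases "u > 0")
    case True
    have "(\<integral>\<^sup>+\<omega>. f \<omega> u \<partial>M) = (\<integral>\<^sup>+\<omega>. ennreal (2 * u) * indicator {\<omega>\<in>space M. u < U \<omega>} \<omega> \<partial>M)"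
      using True by (intro nn_integral_cong) (auto simp: f_def indicator_def)
    also have "\<dots> = ennreal (2 * u) * ennreal (prob {\<omega>\<in>space M. u < U \<omega>})"
      by (subst nn_integral_cmult_indicator) (auto simp: emeasure_eq_measure)
    also have "\<dots> \<le> ennreal (2 * u) * ennreal (exp (- u))"
      using tail[OF True] by (intro mult_left_mono ennreal_leI) auto
    finally show ?thesis using True by (simp add: ennreal_mult'[symmetric] mult.assoc)
  qed (simp add: f_def indicator_def)
  have "(\<integral>\<^sup>+\<omega>. ennreal (U \<omega> ^ 2) \<partial>M) = (\<integral>\<^sup>+\<omega>. \<integral>\<^sup>+u. f \<omega> u \<partial>lborel \<partial>M)"
    by (rule nn_integral_cong) (simp add: layer)
  also have "\<dots> = (\<integral>\<^sup>+u. \<integral>\<^sup>+\<omega>. f \<omega> u \<partial>M \<partial>lborel)"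
    using Fubini'[of f] by simp
  also have "\<dots> \<le> (\<integral>\<^sup>+u. ennreal (2 * u * exp (- u)) * indicator {0..} u \<partial>lborel)"
    by (intro nn_integral_mono slice)
  also have "\<dots> = ennreal (0 - (- 2 * (1 + 0) * exp (- 0)))"
  proof (rule nn_integral_FTC_atLeast[where F="\<lambda>u. - 2 * (1 + u) * exp (- u)"])
    show "DERIV (\<lambda>u. - 2 * (1 + u) * exp (- u)) x :> 2 * x * exp (- x)" for x :: real
      by (rule derivative_eq_intros refl | simp add: algebra_simps)+
    show "((\<lambda>u::real. - 2 * (1 + u) * exp (- u)) \<longlongrightarrow> 0) at_top" by real_asymp
  qed auto
  finally show ?thesis by simp
qed

lemma (in prob_space) expectation_powr_le_of_tail:
  fixes W :: "'a \<Rightarrow> real"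
  assumes [measurable]: "W \<in> borel_measurable M"
    and nonneg: "\<And>\<omega>. \<omega> \<in> space M \<Longrightarrow> W \<omega> \<ge> 0"
    and int: "integrable M (\<lambda>\<omega>. W \<omega> powr p)"
    and "c \<ge> 0" "p > 0"
    and tail: "\<And>u. u > 0 \<Longrightarrow> prob {\<omega>\<in>space M. W \<omega> > (c * u^2) powr (1/p)} \<le> exp (- u)"
  shows "expectation (\<lambda>\<omega>. W \<omega> powr p) \<le> 2 * c"
proof (rule field_le_epsilon)
  fix e :: real assume "e > 0"
  \<comment> \<open>working with \<open>c' > c\<close> also covers the degenerate case \<open>c = 0\<close>\<close>
  define c' where "c' = c + e / 2"
  have c': "c' > 0" "c \<le> c'" using assms \<open>e > 0\<close> by (auto simp: c'_def)
  define U where "U \<omega> = sqrt (W \<omega> powr p / c')" for \<omega>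
  have U2: "U \<omega> ^ 2 = W \<omega> powr p / c'" for \<omega> using c' by (simp add: U_def)
  have "(\<integral>\<^sup>+\<omega>. ennreal (U \<omega> ^ 2) \<partial>M) \<le> 2"
  proof (rule nn_integral_power2_le_of_exp_tail)
    fix u :: real assume u: "u > 0"
    have "{\<omega>\<in>space M. U \<omega> > u} \<subseteq> {\<omega>\<in>space M. W \<omega> > (c * u^2) powr (1/p)}"
    proof safe
      fix \<omega> assume \<omega>: "\<omega> \<in> space M" and "u < U \<omega>"
      then have "u^2 < U \<omega> ^ 2" using u by (intro power_strict_mono) auto
      then have "c * u^2 < W \<omega> powr p" using c' mult_right_mono[OF c'(2), of "u^2"] by (simp add: U2 field_simps)
      then have "(c * u^2) powr (1/p) < (W \<omega> powr p) powr (1/p)"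
        using assms by (intro powr_less_mono2) auto
      then show "(c * u^2) powr (1/p) < W \<omega>" using nonneg[OF \<omega>] assms by (simp add: powr_powr)
    qed
    moreover have "{\<omega>\<in>space M. W \<omega> > (c * u^2) powr (1/p)} \<in> events" by measurable
    ultimately show "prob {\<omega>\<in>space M. U \<omega> > u} \<le> exp (- u)"
      using tail[OF u] by (meson finite_measure_mono order_trans)
  qed (use c' nonneg in \<open>auto simp: U_def\<close>)
  moreover have "integrable M (\<lambda>\<omega>. U \<omega> ^ 2)" unfolding U2 using int by simp
  ultimately have "ennreal (expectation (\<lambda>\<omega>. U \<omega> ^ 2)) \<le> ennreal 2"
    by (simp add: nn_integral_eq_integral)
  then have "expectation (\<lambda>\<omega>. U \<omega> ^ 2) \<le> 2" by (rule ennreal_le_iff[THEN iffD1, rotated]) simp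
  then show "expectation (\<lambda>\<omega>. W \<omega> powr p) \<le> 2 * c + e"
    using c' by (simp add: U2 c'_def field_simps)
qed

lemma (in prob_space) exp_concentration_moment_bound:
  fixes X :: "'a \<Rightarrow> 'd::euclidean_space" and F :: "'d \<Rightarrow> real"
  assumes [measurable]: "X \<in> borel_measurable M" "F \<in> borel_measurable borel"
    and conc: "exp_concentration M X \<alpha>"
    and p: "p \<ge> 1" and nonneg: "\<And>x. F x \<ge> 0" and bounded: "\<And>x. F x \<le> S" and "K \<ge> 0"
    and shift: "\<And>b y. F (b + y) \<le> F b + (K * norm y ^ 2) powr (1/p)"
  shows "expectation (\<lambda>\<omega>. F (X \<omega>) powr p) powr (1/p)
         \<le> 2 * expectation (\<lambda>\<omega>. F (X \<omega>)) + (2 * (K * \<alpha>^2)) powr (1/p)"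
proof (rule field_le_epsilon)
  fix \<delta> :: real assume "\<delta> > 0"
  define A where "A = 2 * expectation (\<lambda>\<omega>. F (X \<omega>)) + \<delta>"
  define W where "W \<omega> = max 0 (F (X \<omega>) - A)" for \<omega>
  have [measurable]: "W \<in> borel_measurable M" unfolding W_def by measurable
  have int_F: "integrable M (\<lambda>\<omega>. F (X \<omega>))"
    using nonneg bounded by (intro integrable_const_bound[where B=S]) auto
  have "A > 0" unfolding A_def using \<open>\<delta> > 0\<close> nonneg by (simp add: integral_nonneg add_nonneg_pos)
  have W: "0 \<le> W \<omega>" "W \<omega> \<le> S" for \<omega>
    using nonneg[of "X \<omega>"] bounded[of "X \<omega>"] \<open>A > 0\<close> by (auto simp: W_def)
  have int_W: "integrable M (\<lambda>\<omega>. W \<omega> powr p)"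
    using W p by (intro integrable_const_bound[where B="S powr p"] AE_I2) (auto intro!: powr_mono2)
  have int_Fp: "integrable M (\<lambda>\<omega>. F (X \<omega>) powr p)"
    using nonneg bounded p by (intro integrable_const_bound[where B="S powr p"] AE_I2) (auto intro!: powr_mono2)
  have int_AW: "integrable M (\<lambda>\<omega>. (A + W \<omega>) powr p)"
    using W p \<open>A > 0\<close>
    by (intro integrable_const_bound[where B="(A + S) powr p"] AE_I2) (auto intro!: powr_mono2)
  have tail: "prob {\<omega>\<in>space M. W \<omega> > (K * \<alpha>^2 * u^2) powr (1/p)} \<le> exp (- u)" if "u > 0" for u
    unfolding W_def A_def using assms int_F \<open>\<delta> > 0\<close> \<open>u > 0\<close> by (intro exp_concentration_excess_tail) auto
  have "expectation (\<lambda>\<omega>. F (X \<omega>) powr p) powr (1/p) \<le> expectation (\<lambda>\<omega>. (A + W \<omega>) powr p) powr (1/p)"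
    using int_Fp int_AW nonneg p
    by (intro powr_mono2 integral_mono integral_nonneg) (auto simp: W_def intro!: powr_mono2)
  also have "\<dots> \<le> expectation (\<lambda>\<omega>. A powr p) powr (1/p) + expectation (\<lambda>\<omega>. W \<omega> powr p) powr (1/p)"
    using p \<open>A > 0\<close> int_W int_AW by (intro Minkowski_integral_powr) (auto simp: W_def)
  also have "expectation (\<lambda>\<omega>. A powr p) powr (1/p) = A"
    using p \<open>A > 0\<close> by (simp add: prob_space powr_powr)
  also have "expectation (\<lambda>\<omega>. W \<omega> powr p) \<le> 2 * (K * \<alpha>^2)"
    using tail \<open>K \<ge> 0\<close> p int_W
    by (intro expectation_powr_le_of_tail) (auto simp: W_def mult.assoc)
  then have "expectation (\<lambda>\<omega>. W \<omega> powr p) powr (1/p) \<le> (2 * (K * \<alpha>^2)) powr (1/p)"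
    using p by (intro powr_mono2 integral_nonneg) auto
  finally show "expectation (\<lambda>\<omega>. F (X \<omega>) powr p) powr (1/p)
      \<le> 2 * expectation (\<lambda>\<omega>. F (X \<omega>)) + (2 * (K * \<alpha>^2)) powr (1/p) + \<delta>"
    by (simp add: A_def)
qed

theorem proposition3p1:
  fixes M :: "'a measure" and X :: "'a \<Rightarrow> 'd::euclidean_space"
    and \<alpha> V p :: real and T :: "'d set"
  assumes "prob_space M"
    and "X \<in> borel_measurable M"
    and "exp_concentration M X \<alpha>"
    and "V > 0" and "p \<ge> 2" and "finite T"
  shows "(prob_space.expectation M
            (\<lambda>\<omega>. \<Sum>t\<in>T. (min \<bar>t \<bullet> X \<omega>\<bar> V) powr p)) powr (1/p)
         \<le> 2 * prob_space.expectation M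
                 (\<lambda>\<omega>. (\<Sum>t\<in>T. (min \<bar>t \<bullet> X \<omega>\<bar> V) powr p) powr (1/p))
           + 2 powr (1/p) * V powr ((p - 2) / p) * (\<alpha> * beta_T T) powr (2/p)"
proof -
  interpret prob_space M by fact
  let ?F = "truncated_lp T V p" and ?\<beta> = "beta_T T"
  let ?K = "V powr (p - 2) * ?\<beta>^2"
  have "?F (b + y) \<le> ?F b + (?K * norm y ^ 2) powr (1/p)" for b y
    using truncated_lp_add_le[OF \<open>finite T\<close> \<open>p \<ge> 2\<close> \<open>V > 0\<close>, of b y]
    by (simp add: power_mult_distrib mult.assoc)
  moreover have "?F \<in> borel_measurable borel" unfolding truncated_lp_def by measurable
  ultimately have "expectation (\<lambda>\<omega>. ?F (X \<omega>) powr p) powr (1/p)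
                   \<le> 2 * expectation (\<lambda>\<omega>. ?F (X \<omega>)) + (2 * (?K * \<alpha>^2)) powr (1/p)"
    using assms truncated_lp_nonneg truncated_lp_le[of V p T]
    by (intro exp_concentration_moment_bound[where F="?F" and S="(real (card T) * V powr p) powr (1/p)"]) auto
  moreover have "(2 * (?K * \<alpha>^2)) powr (1/p) = 2 powr (1/p) * V powr ((p - 2) / p) * (\<alpha> * ?\<beta>) powr (2/p)"
  proof -
    have "\<alpha> \<ge> 0" "?\<beta> \<ge> 0" using exp_concentration_nonneg[OF assms(3)] by (simp_all add: beta_T_nonneg)
    then have "(2 * (?K * \<alpha>^2)) powr (1/p)
               = 2 powr (1/p) * (V powr (p - 2)) powr (1/p) * ((\<alpha> * ?\<beta>) powr 2) powr (1/p)"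
      by (simp add: powr_mult power_mult_distrib mult_ac)
    then show ?thesis by (simp add: powr_powr)
  qed
  ultimately show ?thesis
    using assms by (simp add: truncated_lp_powr) (simp add: truncated_lp_def)
qed

end
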